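(* Let $\pi$ be a policy, $p$ a prior, and $f$ a utility function. For any integer $i$ with $1\le i\le c_{\mathrm{avg}}(\pi,p)$, define $\Delta_i:=f_{\mathrm{avg}}(\pi_i,p)-f_{\mathrm{avg}}(\pi_{i-1},p)$. Then $\Delta_i\ge\Delta^l_{\pi,i}$.
   Context: Finite ground set $V$, finite state set $Y$; a realization $\phi:V\to Y$ is drawn from prior $p$; $f:2^V\times\Phi_V\to\mathbb{R}$. A partial realization $\psi$ maps $\mathrm{dom}(\psi)\subseteq V$ to $Y$; $\phi\sim\psi$ means agreement on $\mathrm{dom}(\psi)$. A (possibly randomized) policy maps the observed partial realization to the next element to select or $\bot$ (terminate); $\psi_t$ denotes observations after $t$ selections; $E(\pi,\phi)$ is the set of selected elements; $f_{\mathrm{avg}}(\pi,p)=\mathbb{E}[f(E(\pi,\phi),\phi)]$, $c_{\mathrm{avg}}(\pi,p)=\mathbb{E}[|E(\pi,\phi)|]$. $\Delta^f_p(v\mid\psi)=\mathbb{E}[f(\{v\}\cup\mathrm{dom}(\psi),\phi)-f(\mathrm{dom}(\psi),\phi)\mid\phi\sim\psi]$. A sub-policy of $\pi$ runs like $\pi$ but may terminate earlier. For $\tau\ge0,\rho\in[0,1]$, $\pi^{\tau,\rho}$ is the sub-policy of $\pi$ that with probability $\rho$ terminates as soon as every remaining element has expected marginal gain strictly smaller than $\tau$, otherwise terminates as soon as every remaining element has expected marginal gain at most $\tau$. For each integer $i\le c_{\mathrm{avg}}(\pi,p)$ the sub-policy of this form with average cost $i$ exists and is unique; denote it $\pi_i$;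 $\pi_0$ terminates before selecting any element. $\Delta^l_{\pi,i}$ is the largest real $u$ such that almost surely, for all $t$ until $\pi_i$ terminates, $\Delta^f_p(\pi_i(\psi_t)\mid\psi_t)\ge u$. *)

theory Defs
  imports "HOL-Probability.Probability"
begin

text \<open>Ground set V = UNIV :: 'v (finite type), states Y = UNIV :: 'y (finite type).
  A realization is phi :: 'v \<Rightarrow> 'y, a partial realization is psi :: 'v \<rightharpoonup> 'y.
  A (possibly randomized) policy maps the observed partial realization to a distribution
  over the next element to select (Some v) or termination (None).\<close>

type_synonym ('v, 'y) policy = "('v \<rightharpoonup> 'y) \<Rightarrow> 'v option pmf"

definition valid_policy :: "('v, 'y) policy \<Rightarrow> bool" where
  "valid_policy \<pi> \<longleftrightarrow> (\<forall>\<psi> v. Some v \<in> set_pmf (\<pi> \<psi>) \<longrightarrow> v \<notin> dom \<psi>)"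

definition consistent :: "('v \<Rightarrow> 'y) \<Rightarrow> ('v \<rightharpoonup> 'y) \<Rightarrow> bool" where
  "consistent \<phi> \<psi> \<longleftrightarrow> (\<forall>v\<in>dom \<psi>. \<psi> v = Some (\<phi> v))"

definition gain :: "('v \<Rightarrow> 'y) pmf \<Rightarrow> ('v set \<Rightarrow> ('v \<Rightarrow> 'y) \<Rightarrow> real) \<Rightarrow> 'v \<Rightarrow> ('v \<rightharpoonup> 'y) \<Rightarrow> real" where
  "gain p f v \<psi> = measure_pmf.expectation (cond_pmf p {\<phi>. consistent \<phi> \<psi>})
      (\<lambda>\<phi>. f (insert v (dom \<psi>)) \<phi> - f (dom \<psi>) \<phi>)"

text \<open>Execution of policy pi on realization phi, additionally terminating as soon as the
  stopping rule S holds (checked before every selection). The result is the final partial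
  realization together with the trace of pairs (psi_t, v_t) of the observations before the
  t-th selection and the element selected there.\<close>
primrec run :: "('v, 'y) policy \<Rightarrow> (('v \<rightharpoonup> 'y) \<Rightarrow> bool) \<Rightarrow> ('v \<Rightarrow> 'y) \<Rightarrow> nat \<Rightarrow> ('v \<rightharpoonup> 'y)
    \<Rightarrow> (('v \<rightharpoonup> 'y) \<times> (('v \<rightharpoonup> 'y) \<times> 'v) list) pmf" where
  "run \<pi> S \<phi> 0 \<psi> = return_pmf (\<psi>, [])"
| "run \<pi> S \<phi> (Suc n) \<psi> =
     (if S \<psi> then return_pmf (\<psi>, [])
      else bind_pmf (\<pi> \<psi>) (\<lambda>a. case a of
              None \<Rightarrow> return_pmf (\<psi>, [])
            | Some v \<Rightarrow> map_pmf (\<lambda>(\<psi>', tr). (\<psi>', (\<psi>, v) # tr)) (run \<pi> S \<phi> n (\<psi>(v \<mapsto> \<phi> v)))))"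

text \<open>Joint distribution of (realization, final partial realization, trace); a valid policy
  makes at most CARD('v) selections, so this fuel is never binding.\<close>
definition exec :: "('v::finite, 'y) policy \<Rightarrow> (('v \<rightharpoonup> 'y) \<Rightarrow> bool) \<Rightarrow> ('v \<Rightarrow> 'y) pmf
    \<Rightarrow> (('v \<Rightarrow> 'y) \<times> ('v \<rightharpoonup> 'y) \<times> (('v \<rightharpoonup> 'y) \<times> 'v) list) pmf" where
  "exec \<pi> S p = bind_pmf p (\<lambda>\<phi>. map_pmf (\<lambda>r. (\<phi>, r)) (run \<pi> S \<phi> CARD('v) Map.empty))"

definition sub_exec :: "('v::finite, 'y) policy \<Rightarrow> ('v \<Rightarrow> 'y) pmf \<Rightarrow> ('v set \<Rightarrow> ('v \<Rightarrow> 'y) \<Rightarrow> real)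
    \<Rightarrow> real \<Rightarrow> real \<Rightarrow> (('v \<Rightarrow> 'y) \<times> ('v \<rightharpoonup> 'y) \<times> (('v \<rightharpoonup> 'y) \<times> 'v) list) pmf" where
  "sub_exec \<pi> p f \<tau> \<rho> = bind_pmf (bernoulli_pmf \<rho>) (\<lambda>b.
      if b then exec \<pi> (\<lambda>\<psi>. \<forall>v. v \<notin> dom \<psi> \<longrightarrow> gain p f v \<psi> < \<tau>) p
      else exec \<pi> (\<lambda>\<psi>. \<forall>v. v \<notin> dom \<psi> \<longrightarrow> gain p f v \<psi> \<le> \<tau>) p)"

definition f_avg_of :: "('v set \<Rightarrow> ('v \<Rightarrow> 'y) \<Rightarrow> real)
    \<Rightarrow> (('v \<Rightarrow> 'y) \<times> ('v \<rightharpoonup> 'y) \<times> (('v \<rightharpoonup> 'y) \<times> 'v) list) pmf \<Rightarrow> real" where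
  "f_avg_of f D = measure_pmf.expectation D (\<lambda>(\<phi>, \<psi>, tr). f (dom \<psi>) \<phi>)"

definition c_avg_of :: "(('v \<Rightarrow> 'y) \<times> ('v \<rightharpoonup> 'y) \<times> (('v \<rightharpoonup> 'y) \<times> 'v) list) pmf \<Rightarrow> real" where
  "c_avg_of D = measure_pmf.expectation D (\<lambda>(\<phi>, \<psi>, tr). real (card (dom \<psi>)))"

definition c_avg :: "('v::finite, 'y) policy \<Rightarrow> ('v \<Rightarrow> 'y) pmf \<Rightarrow> real" where
  "c_avg \<pi> p = c_avg_of (exec \<pi> (\<lambda>_. False) p)"

definition Delta_l :: "(('v \<Rightarrow> 'y) \<times> ('v \<rightharpoonup> 'y) \<times> (('v \<rightharpoonup> 'y) \<times> 'v) list) pmf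
    \<Rightarrow> ('v \<Rightarrow> 'y) pmf \<Rightarrow> ('v set \<Rightarrow> ('v \<Rightarrow> 'y) \<Rightarrow> real) \<Rightarrow> real" where
  "Delta_l D p f = Sup {u. AE \<omega> in measure_pmf D.
      \<forall>(\<psi>, v) \<in> set (snd (snd \<omega>)). u \<le> gain p f v \<psi>}"

end

(* Write m for the lower bound on the gains of the selections of pi_i and score a final partial
   realization psi by the penalized utility f (dom psi) - m |dom psi|.  Selecting an element of
   expected marginal gain at least m does not decrease the expected penalized utility, so stopping
   a run earlier, at states where the original run still makes such selections, can only lower it.
   The sub-policies pi^{tau,rho} stop earlier the larger tau is and, for equal tau, the smaller rho
   is.  Since pi_{i-1} has the smaller average cost, it therefore stops no later than pi_i, whence
   f_avg(pi_{i-1}) - m (i - 1) <= f_avg(pi_i) - m i. *)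

theory Submission
  imports Defs
begin

definition penalized :: "('v set \<Rightarrow> ('v \<Rightarrow> 'y) \<Rightarrow> real) \<Rightarrow> real \<Rightarrow> ('v \<rightharpoonup> 'y) \<Rightarrow> ('v \<Rightarrow> 'y) \<Rightarrow> real"
  where "penalized f m \<psi> \<phi> = f (dom \<psi>) \<phi> - m * real (card (dom \<psi>))"

text \<open>Expected penalized utility of stopping at \<open>\<psi>\<close>, resp. of running the policy from \<open>\<psi>\<close>,
  conditioned on \<open>\<psi>\<close> but left unnormalized (weighted by the probability of \<open>\<psi>\<close>), so that no
  division by a possibly vanishing probability occurs.\<close>

definition stop_value :: "('v::finite \<Rightarrow> 'y::finite) pmf \<Rightarrow> ('v set \<Rightarrow> ('v \<Rightarrow> 'y) \<Rightarrow> real) \<Rightarrow> real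
    \<Rightarrow> ('v \<rightharpoonup> 'y) \<Rightarrow> real"
  where "stop_value p f m \<psi> = (\<Sum>\<phi>\<in>UNIV. pmf p \<phi> * of_bool (consistent \<phi> \<psi>) * penalized f m \<psi> \<phi>)"

definition run_value :: "('v::finite, 'y::finite) policy \<Rightarrow> (('v \<rightharpoonup> 'y) \<Rightarrow> bool) \<Rightarrow> ('v \<Rightarrow> 'y) pmf
    \<Rightarrow> ('v set \<Rightarrow> ('v \<Rightarrow> 'y) \<Rightarrow> real) \<Rightarrow> real \<Rightarrow> nat \<Rightarrow> ('v \<rightharpoonup> 'y) \<Rightarrow> real"
  where "run_value \<pi> S p f m n \<psi> = (\<Sum>\<phi>\<in>UNIV. pmf p \<phi> * of_bool (consistent \<phi> \<psi>) *
    measure_pmf.expectation (run \<pi> S \<phi> n \<psi>) (\<lambda>r. penalized f m (fst r) \<phi>))"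

definition selections_gain_ge :: "('v, 'y) policy \<Rightarrow> (('v \<rightharpoonup> 'y) \<Rightarrow> bool) \<Rightarrow> ('v \<Rightarrow> 'y) pmf
    \<Rightarrow> ('v set \<Rightarrow> ('v \<Rightarrow> 'y) \<Rightarrow> real) \<Rightarrow> real \<Rightarrow> nat \<Rightarrow> ('v \<rightharpoonup> 'y) \<Rightarrow> bool"
  where "selections_gain_ge \<pi> S p f m n \<psi> \<longleftrightarrow> (\<forall>\<phi>\<in>set_pmf p. consistent \<phi> \<psi> \<longrightarrow>
    (\<forall>r\<in>set_pmf (run \<pi> S \<phi> n \<psi>). \<forall>(\<psi>', v)\<in>set (snd r). m \<le> gain p f v \<psi>'))"

lemma finite_set_pmf_run: "finite (set_pmf (run (\<pi> :: ('v::finite, 'y) policy) S \<phi> n \<psi>))"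
  by (induction n arbitrary: \<psi>) (auto simp: set_bind_pmf split: option.splits intro!: finite_UN_I)

lemma expectation_run_Suc:
  fixes \<pi> :: "('v::finite, 'y::finite) policy"
  assumes "\<not> S \<psi>"
  shows "measure_pmf.expectation (run \<pi> S \<phi> (Suc n) \<psi>) (\<lambda>r. g (fst r)) =
    (\<Sum>a\<in>UNIV. pmf (\<pi> \<psi>) a * (case a of None \<Rightarrow> g \<psi>
       | Some v \<Rightarrow> measure_pmf.expectation (run \<pi> S \<phi> n (\<psi>(v \<mapsto> \<phi> v))) (\<lambda>r. g (fst r))))"
  unfolding run.simps if_not_P[OF assms]
  by (subst pmf_expectation_bind[of UNIV])
     (auto intro!: sum.cong simp: finite_set_pmf_run integral_map_pmf split_beta split: option.splits)

lemma consistent_upd: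
  "v \<notin> dom \<psi> \<Longrightarrow> consistent \<phi> (\<psi>(v \<mapsto> y)) \<longleftrightarrow> consistent \<phi> \<psi> \<and> \<phi> v = y"
  unfolding consistent_def by (auto simp: domIff)

lemma sum_consistent_upd:
  fixes p :: "('v::finite \<Rightarrow> 'y::finite) pmf"
  assumes "v \<notin> dom \<psi>"
  shows "(\<Sum>y\<in>UNIV. \<Sum>\<phi>\<in>UNIV. pmf p \<phi> * of_bool (consistent \<phi> (\<psi>(v \<mapsto> y))) * G y \<phi>) =
    (\<Sum>\<phi>\<in>UNIV. pmf p \<phi> * of_bool (consistent \<phi> \<psi>) * G (\<phi> v) \<phi>)"
proof -
  have "(\<Sum>y\<in>UNIV. pmf p \<phi> * of_bool (consistent \<phi> (\<psi>(v \<mapsto> y))) * G y \<phi>) =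
      pmf p \<phi> * of_bool (consistent \<phi> \<psi>) * G (\<phi> v) \<phi>" for \<phi>
    by (simp add: consistent_upd[OF assms] of_bool_def if_distrib if_distribR cong: if_cong)
  then show ?thesis
    by (subst sum.swap) simp
qed

lemma run_value_0: "run_value \<pi> S p f m 0 \<psi> = stop_value p f m \<psi>"
  by (simp add: run_value_def stop_value_def)

lemma run_value_stop: "S \<psi> \<Longrightarrow> run_value \<pi> S p f m (Suc n) \<psi> = stop_value p f m \<psi>"
  by (simp add: run_value_def stop_value_def)

lemma run_value_always_stop: "run_value \<pi> (\<lambda>_. True) p f m n \<psi> = stop_value p f m \<psi>"
  by (cases n) (simp_all add: run_value_0 run_value_stop)

lemma run_value_Suc:
  fixes \<pi> :: "('v::finite, 'y::finite) policy"
  assumes \<pi>: "valid_policy \<pi>" and go: "\<not> S \<psi>"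
  shows "run_value \<pi> S p f m (Suc n) \<psi> = (\<Sum>a\<in>UNIV. pmf (\<pi> \<psi>) a * (case a of
      None \<Rightarrow> stop_value p f m \<psi>
    | Some v \<Rightarrow> \<Sum>y\<in>UNIV. run_value \<pi> S p f m n (\<psi>(v \<mapsto> y))))"
proof -
  let ?E = "\<lambda>\<phi> \<psi>'. measure_pmf.expectation (run \<pi> S \<phi> n \<psi>') (\<lambda>r. penalized f m (fst r) \<phi>)"
  have expectation_Suc: "measure_pmf.expectation (run \<pi> S \<phi> (Suc n) \<psi>) (\<lambda>r. penalized f m (fst r) \<phi>) =
      (\<Sum>a\<in>UNIV. pmf (\<pi> \<psi>) a * (case a of None \<Rightarrow> penalized f m \<psi> \<phi> | Some v \<Rightarrow> ?E \<phi> (\<psi>(v \<mapsto> \<phi> v))))"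
    for \<phi>
    by (rule expectation_run_Suc) (rule go)
  have "run_value \<pi> S p f m (Suc n) \<psi> = (\<Sum>a\<in>UNIV. pmf (\<pi> \<psi>) a *
      (\<Sum>\<phi>\<in>UNIV. pmf p \<phi> * of_bool (consistent \<phi> \<psi>) *
        (case a of None \<Rightarrow> penalized f m \<psi> \<phi> | Some v \<Rightarrow> ?E \<phi> (\<psi>(v \<mapsto> \<phi> v)))))"
    unfolding run_value_def expectation_Suc sum_distrib_left
    by (subst sum.swap) (simp add: mult_ac)
  also have "\<dots> = (\<Sum>a\<in>UNIV. pmf (\<pi> \<psi>) a * (case a of
      None \<Rightarrow> stop_value p f m \<psi>
    | Some v \<Rightarrow> \<Sum>y\<in>UNIV. run_value \<pi> S p f m n (\<psi>(v \<mapsto> y))))"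
  proof (intro sum.cong refl)
    fix a
    show "pmf (\<pi> \<psi>) a * (\<Sum>\<phi>\<in>UNIV. pmf p \<phi> * of_bool (consistent \<phi> \<psi>) *
        (case a of None \<Rightarrow> penalized f m \<psi> \<phi> | Some v \<Rightarrow> ?E \<phi> (\<psi>(v \<mapsto> \<phi> v)))) =
      pmf (\<pi> \<psi>) a * (case a of None \<Rightarrow> stop_value p f m \<psi>
        | Some v \<Rightarrow> \<Sum>y\<in>UNIV. run_value \<pi> S p f m n (\<psi>(v \<mapsto> y)))"
    proof (cases "a \<in> set_pmf (\<pi> \<psi>)")
      case True
      then have "v \<notin> dom \<psi>" if "a = Some v" for v
        using \<pi> that by (auto simp: valid_policy_def)
      then show ?thesis
        by (auto simp: stop_value_def run_value_def sum_consistent_upd split: option.split)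
    qed (simp add: set_pmf_iff)
  qed
  finally show ?thesis .
qed

lemma prob_consistent:
  fixes p :: "('v::finite \<Rightarrow> 'y::finite) pmf"
  shows "measure_pmf.prob p {\<phi>. consistent \<phi> \<psi>} = (\<Sum>\<phi>\<in>UNIV. pmf p \<phi> * of_bool (consistent \<phi> \<psi>))"
  by (simp add: measure_measure_pmf_finite)

lemma gain_mult_prob_consistent:
  fixes p :: "('v::finite \<Rightarrow> 'y::finite) pmf"
  shows "gain p f v \<psi> * measure_pmf.prob p {\<phi>. consistent \<phi> \<psi>} =
    (\<Sum>\<phi>\<in>UNIV. pmf p \<phi> * of_bool (consistent \<phi> \<psi>) * (f (insert v (dom \<psi>)) \<phi> - f (dom \<psi>) \<phi>))"
proof (cases "set_pmf p \<inter> {\<phi>. consistent \<phi> \<psi>} = {}")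
  case True
  then have weight_0: "pmf p \<phi> * of_bool (consistent \<phi> \<psi>) = 0" for \<phi>
    by (auto simp: set_pmf_iff)
  have "measure_pmf.prob p {\<phi>. consistent \<phi> \<psi>} = 0"
    using True by (simp add: measure_pmf_zero_iff)
  then show ?thesis
    by (simp only: weight_0 mult_zero_left mult_zero_right sum.neutral_const)
next
  case False
  let ?C = "{\<phi>. consistent \<phi> \<psi>}"
  have "gain p f v \<psi> = (\<Sum>\<phi>\<in>UNIV. (f (insert v (dom \<psi>)) \<phi> - f (dom \<psi>) \<phi>) * pmf (cond_pmf p ?C) \<phi>)"
    unfolding gain_def by (rule integral_measure_pmf_real) auto
  also have "\<dots> = (\<Sum>\<phi>\<in>UNIV. pmf p \<phi> * of_bool (consistent \<phi> \<psi>) *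
      (f (insert v (dom \<psi>)) \<phi> - f (dom \<psi>) \<phi>) / measure_pmf.prob p ?C)"
    by (intro sum.cong refl) (simp add: pmf_cond[OF False])
  also have "\<dots> = (\<Sum>\<phi>\<in>UNIV. pmf p \<phi> * of_bool (consistent \<phi> \<psi>) *
      (f (insert v (dom \<psi>)) \<phi> - f (dom \<psi>) \<phi>)) / measure_pmf.prob p ?C"
    by (rule sum_divide_distrib[symmetric])
  finally show ?thesis
    using False by (simp add: measure_pmf_zero_iff)
qed

lemma sum_stop_value_upd:
  fixes p :: "('v::finite \<Rightarrow> 'y::finite) pmf"
  assumes "v \<notin> dom \<psi>"
  shows "(\<Sum>y\<in>UNIV. stop_value p f m (\<psi>(v \<mapsto> y))) =
    stop_value p f m \<psi> + (gain p f v \<psi> - m) * measure_pmf.prob p {\<phi>. consistent \<phi> \<psi>}"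
proof -
  let ?w = "\<lambda>\<phi>. pmf p \<phi> * of_bool (consistent \<phi> \<psi>)"
  let ?\<Delta> = "\<lambda>\<phi>. f (insert v (dom \<psi>)) \<phi> - f (dom \<psi>) \<phi>"
  have select: "penalized f m (\<psi>(v \<mapsto> \<phi> v)) \<phi> = penalized f m \<psi> \<phi> + ?\<Delta> \<phi> - m" for \<phi>
    using assms by (simp add: penalized_def algebra_simps)
  have "(\<Sum>\<phi>\<in>UNIV. ?w \<phi> * penalized f m (\<psi>(v \<mapsto> \<phi> v)) \<phi>) =
      (\<Sum>\<phi>\<in>UNIV. ?w \<phi> * penalized f m \<psi> \<phi> + ?w \<phi> * ?\<Delta> \<phi> - m * ?w \<phi>)"
    by (intro sum.cong refl, subst select) (simp add: algebra_simps)
  also have "\<dots> = (\<Sum>\<phi>\<in>UNIV. ?w \<phi> * penalized f m \<psi> \<phi>) + (\<Sum>\<phi>\<in>UNIV. ?w \<phi> * ?\<Delta> \<phi>)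
      - m * (\<Sum>\<phi>\<in>UNIV. ?w \<phi>)"
    by (simp only: sum_subtractf sum.distrib sum_distrib_left)
  finally have "(\<Sum>\<phi>\<in>UNIV. ?w \<phi> * penalized f m (\<psi>(v \<mapsto> \<phi> v)) \<phi>) =
      (\<Sum>\<phi>\<in>UNIV. ?w \<phi> * penalized f m \<psi> \<phi>) + (\<Sum>\<phi>\<in>UNIV. ?w \<phi> * ?\<Delta> \<phi>)
      - m * (\<Sum>\<phi>\<in>UNIV. ?w \<phi>)" .
  then show ?thesis
    unfolding stop_value_def sum_consistent_upd[OF assms] left_diff_distrib gain_mult_prob_consistent
    unfolding prob_consistent
    by simp
qed

lemma set_pmf_run_SucI:
  assumes "\<not> S \<psi>" "Some v \<in> set_pmf (\<pi> \<psi>)" "r \<in> set_pmf (run \<pi> S \<phi> n (\<psi>(v \<mapsto> \<phi> v)))"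
  shows "(fst r, (\<psi>, v) # snd r) \<in> set_pmf (run \<pi> S \<phi> (Suc n) \<psi>)"
  using assms by (auto simp: set_bind_pmf split_beta intro!: bexI[of _ "Some v"] image_eqI[of _ _ r])

lemma selections_gain_ge_upd:
  assumes sel: "selections_gain_ge \<pi> S p f m (Suc n) \<psi>" and go: "\<not> S \<psi>"
    and v: "Some v \<in> set_pmf (\<pi> \<psi>)" "v \<notin> dom \<psi>"
  shows "selections_gain_ge \<pi> S p f m n (\<psi>(v \<mapsto> y))"
  unfolding selections_gain_ge_def
proof (rule ballI, rule impI, rule ballI)
  fix \<phi> r
  assume \<phi>: "\<phi> \<in> set_pmf p" "consistent \<phi> (\<psi>(v \<mapsto> y))"
    and r: "r \<in> set_pmf (run \<pi> S \<phi> n (\<psi>(v \<mapsto> y)))"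
  have "consistent \<phi> \<psi>" "\<phi> v = y"
    using \<phi>(2) consistent_upd[OF v(2)] by auto
  with r have "(fst r, (\<psi>, v) # snd r) \<in> set_pmf (run \<pi> S \<phi> (Suc n) \<psi>)"
    using set_pmf_run_SucI[where \<pi> = \<pi> and S = S and \<psi> = \<psi>, OF go v(1)] by blast
  with sel \<phi>(1) \<open>consistent \<phi> \<psi>\<close> show "\<forall>(\<psi>', v')\<in>set (snd r). m \<le> gain p f v' \<psi>'"
    unfolding selections_gain_ge_def by fastforce
qed

lemma selections_gain_ge_gain:
  assumes sel: "selections_gain_ge \<pi> S p f m (Suc n) \<psi>" and go: "\<not> S \<psi>"
    and v: "Some v \<in> set_pmf (\<pi> \<psi>)" and \<phi>: "\<phi> \<in> set_pmf p" "consistent \<phi> \<psi>"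
  shows "m \<le> gain p f v \<psi>"
proof -
  obtain r where "r \<in> set_pmf (run \<pi> S \<phi> n (\<psi>(v \<mapsto> \<phi> v)))"
    by (meson set_pmf_not_empty ex_in_conv)
  then have "(fst r, (\<psi>, v) # snd r) \<in> set_pmf (run \<pi> S \<phi> (Suc n) \<psi>)"
    by (rule set_pmf_run_SucI[where \<pi> = \<pi> and S = S and \<psi> = \<psi>, OF go v])
  with sel \<phi> show ?thesis
    unfolding selections_gain_ge_def by fastforce
qed

lemma stop_value_le_sum_upd:
  fixes p :: "('v::finite \<Rightarrow> 'y::finite) pmf"
  assumes sel: "selections_gain_ge \<pi> S p f m (Suc n) \<psi>" and go: "\<not> S \<psi>"
    and v: "Some v \<in> set_pmf (\<pi> \<psi>)" "v \<notin> dom \<psi>"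
  shows "stop_value p f m \<psi> \<le> (\<Sum>y\<in>UNIV. stop_value p f m (\<psi>(v \<mapsto> y)))"
proof -
  let ?P = "measure_pmf.prob p {\<phi>. consistent \<phi> \<psi>}"
  have "m \<le> gain p f v \<psi>" if "?P \<noteq> 0"
    using that selections_gain_ge_gain[OF sel go v(1)] by (auto simp: measure_pmf_zero_iff)
  then have "0 \<le> (gain p f v \<psi> - m) * ?P"
    by (cases "?P = 0") simp_all
  then show ?thesis
    unfolding sum_stop_value_upd[OF v(2)] by simp
qed

lemma sum_pmf_mono:
  fixes M :: "'a::finite pmf"
  assumes "\<And>a. a \<in> set_pmf M \<Longrightarrow> X a \<le> Y a"
  shows "(\<Sum>a\<in>UNIV. pmf M a * X a) \<le> (\<Sum>a\<in>UNIV. pmf M a * Y a)"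
proof (rule sum_mono)
  fix a
  show "pmf M a * X a \<le> pmf M a * Y a"
    using assms[of a] by (cases "a \<in> set_pmf M") (simp_all add: mult_left_mono set_pmf_iff)
qed

lemma stop_value_le_run_value_Suc:
  fixes \<pi> :: "('v::finite, 'y::finite) policy"
  assumes \<pi>: "valid_policy \<pi>" and sel: "selections_gain_ge \<pi> S p f m (Suc n) \<psi>" and go: "\<not> S \<psi>"
    and continue: "\<And>v. Some v \<in> set_pmf (\<pi> \<psi>) \<Longrightarrow>
      (\<Sum>y\<in>UNIV. stop_value p f m (\<psi>(v \<mapsto> y))) \<le> (\<Sum>y\<in>UNIV. run_value \<pi> S p f m n (\<psi>(v \<mapsto> y)))"
  shows "stop_value p f m \<psi> \<le> run_value \<pi> S p f m (Suc n) \<psi>"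
proof -
  have "stop_value p f m \<psi> = (\<Sum>a\<in>UNIV. pmf (\<pi> \<psi>) a * stop_value p f m \<psi>)"
    by (simp add: sum_pmf_eq_1 flip: sum_distrib_right)
  also have "\<dots> \<le> run_value \<pi> S p f m (Suc n) \<psi>"
    unfolding run_value_Suc[where S = S and \<psi> = \<psi>, OF \<pi> go]
  proof (rule sum_pmf_mono)
    fix a
    assume a: "a \<in> set_pmf (\<pi> \<psi>)"
    show "stop_value p f m \<psi> \<le> (case a of None \<Rightarrow> stop_value p f m \<psi>
        | Some v \<Rightarrow> \<Sum>y\<in>UNIV. run_value \<pi> S p f m n (\<psi>(v \<mapsto> y)))"
    proof (cases a)
      case (Some v)
      with a \<pi> have "v \<notin> dom \<psi>"
        by (auto simp: valid_policy_def)
      with a Some have "stop_value p f m \<psi> \<le> (\<Sum>y\<in>UNIV. stop_value p f m (\<psi>(v \<mapsto> y)))"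
        using stop_value_le_sum_upd[OF sel go] by blast
      also have "\<dots> \<le> (\<Sum>y\<in>UNIV. run_value \<pi> S p f m n (\<psi>(v \<mapsto> y)))"
        using continue a Some by blast
      finally show ?thesis
        using Some by simp
    qed simp
  qed
  finally show ?thesis .
qed

lemma run_value_earlier_stop_le:
  fixes \<pi> :: "('v::finite, 'y::finite) policy"
  assumes \<pi>: "valid_policy \<pi>" and earlier: "\<And>\<psi>. S \<psi> \<Longrightarrow> S' \<psi>"
    and sel: "selections_gain_ge \<pi> S p f m n \<psi>"
  shows "run_value \<pi> S' p f m n \<psi> \<le> run_value \<pi> S p f m n \<psi>"
  using earlier sel
proof (induction n arbitrary: \<psi> S')
  case 0
  then show ?case by (simp add: run_value_0)
next
  case (Suc n)
  show ?case
  proof (cases "S \<psi>")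
    case True
    with Suc.prems(1) show ?thesis by (simp add: run_value_stop)
  next
    case go: False
    have continue: "(\<Sum>y\<in>UNIV. run_value \<pi> S'' p f m n (\<psi>(v \<mapsto> y))) \<le>
        (\<Sum>y\<in>UNIV. run_value \<pi> S p f m n (\<psi>(v \<mapsto> y)))"
      if v: "Some v \<in> set_pmf (\<pi> \<psi>)" and earlier: "\<And>\<psi>. S \<psi> \<Longrightarrow> S'' \<psi>" for v S''
    proof -
      from v \<pi> have "v \<notin> dom \<psi>"
        by (auto simp: valid_policy_def)
      then show ?thesis
        using Suc.IH[where S' = S'', OF earlier] selections_gain_ge_upd[OF Suc.prems(2) go v]
        by (intro sum_mono) blast
    qed
    show ?thesis
    proof (cases "S' \<psi>")
      case True
      have "stop_value p f m \<psi> \<le> run_value \<pi> S p f m (Suc n) \<psi>"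
        using continue[where S'' = "\<lambda>_. True"]
        by (intro stop_value_le_run_value_Suc[OF \<pi> Suc.prems(2) go]) (simp add: run_value_always_stop)
      with True show ?thesis
        by (simp add: run_value_stop)
    next
      case False
      show ?thesis
        unfolding run_value_Suc[where S = S and \<psi> = \<psi>, OF \<pi> go]
          run_value_Suc[where S = S' and \<psi> = \<psi>, OF \<pi> False]
        using continue[where S'' = S', OF _ Suc.prems(1)]
        by (intro sum_pmf_mono) (auto split: option.split)
    qed
  qed
qed

lemma finite_set_pmf_exec: "finite (set_pmf (exec (\<pi> :: ('v::finite, 'y::finite) policy) S p))"
  unfolding exec_def by (auto simp: set_bind_pmf finite_set_pmf_run intro!: finite_UN_I)

definition penalized_avg :: "('v set \<Rightarrow> ('v \<Rightarrow> 'y) \<Rightarrow> real) \<Rightarrow> real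
    \<Rightarrow> (('v \<Rightarrow> 'y) \<times> ('v \<rightharpoonup> 'y) \<times> (('v \<rightharpoonup> 'y) \<times> 'v) list) pmf \<Rightarrow> real"
  where "penalized_avg f m D = f_avg_of f D - m * c_avg_of D"

definition trace_gains_ge :: "(('v \<Rightarrow> 'y) \<times> ('v \<rightharpoonup> 'y) \<times> (('v \<rightharpoonup> 'y) \<times> 'v) list) pmf
    \<Rightarrow> ('v \<Rightarrow> 'y) pmf \<Rightarrow> ('v set \<Rightarrow> ('v \<Rightarrow> 'y) \<Rightarrow> real) \<Rightarrow> real \<Rightarrow> bool"
  where "trace_gains_ge D p f m \<longleftrightarrow> (\<forall>\<omega>\<in>set_pmf D. \<forall>(\<psi>, v)\<in>set (snd (snd \<omega>)). m \<le> gain p f v \<psi>)"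

lemma trace_gains_ge_subset:
  "set_pmf D' \<subseteq> set_pmf D \<Longrightarrow> trace_gains_ge D p f m \<Longrightarrow> trace_gains_ge D' p f m"
  unfolding trace_gains_ge_def by blast

lemma penalized_avg_exec:
  fixes \<pi> :: "('v::finite, 'y::finite) policy"
  shows "penalized_avg f m (exec \<pi> S p) = run_value \<pi> S p f m CARD('v) Map.empty"
proof -
  have "penalized_avg f m (exec \<pi> S p) =
      measure_pmf.expectation (exec \<pi> S p) (\<lambda>(\<phi>, \<psi>, tr). penalized f m \<psi> \<phi>)"
    unfolding penalized_avg_def f_avg_of_def c_avg_of_def penalized_def split_beta
    by (simp add: integrable_measure_pmf_finite[OF finite_set_pmf_exec] Bochner_Integration.integral_diff)
  also have "\<dots> = run_value \<pi> S p f m CARD('v) Map.empty"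
    unfolding exec_def run_value_def
    by (subst pmf_expectation_bind[of UNIV])
       (auto intro!: sum.cong simp: finite_set_pmf_run integral_map_pmf consistent_def split_beta)
  finally show ?thesis .
qed

lemma penalized_avg_exec_mono:
  fixes \<pi> :: "('v::finite, 'y::finite) policy"
  assumes "valid_policy \<pi>" "\<And>\<psi>. S \<psi> \<Longrightarrow> S' \<psi>" "trace_gains_ge (exec \<pi> S p) p f m"
  shows "penalized_avg f m (exec \<pi> S' p) \<le> penalized_avg f m (exec \<pi> S p)"
  unfolding penalized_avg_exec
proof (rule run_value_earlier_stop_le[OF assms(1,2)])
  show "selections_gain_ge \<pi> S p f m CARD('v) Map.empty"
    using assms(3) unfolding selections_gain_ge_def trace_gains_ge_def exec_def
    by (auto simp: set_bind_pmf)
qed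

definition gains_below :: "('v \<Rightarrow> 'y) pmf \<Rightarrow> ('v set \<Rightarrow> ('v \<Rightarrow> 'y) \<Rightarrow> real) \<Rightarrow> real \<Rightarrow> ('v \<rightharpoonup> 'y) \<Rightarrow> bool"
  where "gains_below p f t \<psi> \<longleftrightarrow> (\<forall>v. v \<notin> dom \<psi> \<longrightarrow> gain p f v \<psi> < t)"

definition gains_at_most :: "('v \<Rightarrow> 'y) pmf \<Rightarrow> ('v set \<Rightarrow> ('v \<Rightarrow> 'y) \<Rightarrow> real) \<Rightarrow> real \<Rightarrow> ('v \<rightharpoonup> 'y) \<Rightarrow> bool"
  where "gains_at_most p f t \<psi> \<longleftrightarrow> (\<forall>v. v \<notin> dom \<psi> \<longrightarrow> gain p f v \<psi> \<le> t)"

lemma gains_below_imp_at_most: "gains_below p f t \<psi> \<Longrightarrow> gains_at_most p f t \<psi>"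
  unfolding gains_below_def gains_at_most_def by (auto simp: less_imp_le)

lemma gains_at_most_imp_below: "t < t' \<Longrightarrow> gains_at_most p f t \<psi> \<Longrightarrow> gains_below p f t' \<psi>"
  unfolding gains_below_def gains_at_most_def by force

lemma sub_exec_eq: "sub_exec \<pi> p f \<tau> \<rho> = bernoulli_pmf \<rho> \<bind>
    (\<lambda>b. if b then exec \<pi> (gains_below p f \<tau>) p else exec \<pi> (gains_at_most p f \<tau>) p)"
  unfolding sub_exec_def gains_below_def[abs_def] gains_at_most_def[abs_def] ..

lemma expectation_sub_exec:
  fixes \<pi> :: "('v::finite, 'y::finite) policy"
    and h :: "('v \<Rightarrow> 'y) \<times> ('v \<rightharpoonup> 'y) \<times> (('v \<rightharpoonup> 'y) \<times> 'v) list \<Rightarrow> real"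
  assumes "0 \<le> \<rho>" "\<rho> \<le> 1"
  shows "measure_pmf.expectation (sub_exec \<pi> p f \<tau> \<rho>) h =
    \<rho> * measure_pmf.expectation (exec \<pi> (gains_below p f \<tau>) p) h +
    (1 - \<rho>) * measure_pmf.expectation (exec \<pi> (gains_at_most p f \<tau>) p) h"
  using assms unfolding sub_exec_eq
  by (subst pmf_expectation_bind[of UNIV]) (simp_all add: finite_set_pmf_exec, simp add: UNIV_bool)

lemma penalized_avg_sub_exec:
  fixes \<pi> :: "('v::finite, 'y::finite) policy"
  assumes "0 \<le> \<rho>" "\<rho> \<le> 1"
  shows "penalized_avg g m (sub_exec \<pi> p f \<tau> \<rho>) =
    \<rho> * penalized_avg g m (exec \<pi> (gains_below p f \<tau>) p) +
    (1 - \<rho>) * penalized_avg g m (exec \<pi> (gains_at_most p f \<tau>) p)"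
  unfolding penalized_avg_def f_avg_of_def c_avg_of_def expectation_sub_exec[OF assms]
  by (simp add: algebra_simps)

lemma trace_gains_ge_sub_exec:
  assumes "0 \<le> \<rho>" "\<rho> \<le> 1" and gains: "trace_gains_ge (sub_exec \<pi> p f \<tau> \<rho>) p g m"
  shows "0 < \<rho> \<Longrightarrow> trace_gains_ge (exec \<pi> (gains_below p f \<tau>) p) p g m"
    and "\<rho> < 1 \<Longrightarrow> trace_gains_ge (exec \<pi> (gains_at_most p f \<tau>) p) p g m"
proof -
  assume "0 < \<rho>"
  with assms(1,2) have "True \<in> set_pmf (bernoulli_pmf \<rho>)"
    by (simp add: set_pmf_iff)
  then have "set_pmf (exec \<pi> (gains_below p f \<tau>) p) \<subseteq> set_pmf (sub_exec \<pi> p f \<tau> \<rho>)"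
    unfolding sub_exec_eq set_bind_pmf by force
  then show "trace_gains_ge (exec \<pi> (gains_below p f \<tau>) p) p g m"
    using gains by (rule trace_gains_ge_subset)
next
  assume "\<rho> < 1"
  with assms(1,2) have "False \<in> set_pmf (bernoulli_pmf \<rho>)"
    by (simp add: set_pmf_iff)
  then have "set_pmf (exec \<pi> (gains_at_most p f \<tau>) p) \<subseteq> set_pmf (sub_exec \<pi> p f \<tau> \<rho>)"
    unfolding sub_exec_eq set_bind_pmf by force
  then show "trace_gains_ge (exec \<pi> (gains_at_most p f \<tau>) p) p g m"
    using gains by (rule trace_gains_ge_subset)
qed

lemma convex_comb_ge:
  fixes \<rho> a b M :: real
  assumes "0 \<le> \<rho>" "\<rho> \<le> 1" "0 < \<rho> \<Longrightarrow> M \<le> a" "\<rho> < 1 \<Longrightarrow> M \<le> b"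
  shows "M \<le> \<rho> * a + (1 - \<rho>) * b"
proof -
  have "\<rho> * M \<le> \<rho> * a"
    using assms by (cases "\<rho> = 0") (auto intro: mult_left_mono)
  moreover have "(1 - \<rho>) * M \<le> (1 - \<rho>) * b"
    using assms by (cases "\<rho> = 1") (auto intro: mult_left_mono)
  ultimately show ?thesis
    by (simp add: left_diff_distrib)
qed

lemma penalized_avg_sub_exec_mono:
  fixes \<pi> :: "('v::finite, 'y::finite) policy"
  assumes \<pi>: "valid_policy \<pi>" and \<rho>: "0 \<le> \<rho>" "\<rho> \<le> 1" and \<rho>': "0 \<le> \<rho>'" "\<rho>' \<le> 1"
    and later: "\<tau> < \<tau>' \<or> \<tau> = \<tau>' \<and> \<rho>' \<le> \<rho>"
    and gains: "trace_gains_ge (sub_exec \<pi> p f \<tau> \<rho>) p g m"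
  shows "penalized_avg g m (sub_exec \<pi> p f \<tau>' \<rho>') \<le> penalized_avg g m (sub_exec \<pi> p f \<tau> \<rho>)"
proof -
  let ?K = "\<lambda>S. penalized_avg g m (exec \<pi> S p)"
  let ?L = "gains_below p f \<tau>" and ?E = "gains_at_most p f \<tau>"
  have below: "?K S \<le> ?K ?L" if "0 < \<rho>" "\<And>\<psi>. ?L \<psi> \<Longrightarrow> S \<psi>" for S
    by (rule penalized_avg_exec_mono[OF \<pi> that(2) trace_gains_ge_sub_exec(1)[OF \<rho> gains that(1)]])
  have at_most: "?K S \<le> ?K ?E" if "\<rho> < 1" "\<And>\<psi>. ?E \<psi> \<Longrightarrow> S \<psi>" for S
    by (rule penalized_avg_exec_mono[OF \<pi> that(2) trace_gains_ge_sub_exec(2)[OF \<rho> gains that(1)]])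
  from later show ?thesis
  proof (elim disjE conjE)
    assume "\<tau> < \<tau>'"
    have E_stops: "gains_below p f \<tau>' \<psi>" "gains_at_most p f \<tau>' \<psi>" if "?E \<psi>" for \<psi>
      using gains_at_most_imp_below[OF \<open>\<tau> < \<tau>'\<close> that] by (simp_all add: gains_below_imp_at_most)
    note L_stops = E_stops[OF gains_below_imp_at_most]
    have "penalized_avg g m (sub_exec \<pi> p f \<tau>' \<rho>') \<le> ?K ?L" if "0 < \<rho>"
      unfolding penalized_avg_sub_exec[OF \<rho>']
      using below[OF that L_stops(1)] below[OF that L_stops(2)] \<rho>' by (intro convex_bound_le) auto
    moreover have "penalized_avg g m (sub_exec \<pi> p f \<tau>' \<rho>') \<le> ?K ?E" if "\<rho> < 1"
      unfolding penalized_avg_sub_exec[OF \<rho>']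
      using at_most[OF that E_stops(1)] at_most[OF that E_stops(2)] \<rho>' by (intro convex_bound_le) auto
    ultimately show ?thesis
      unfolding penalized_avg_sub_exec[OF \<rho>, of g m] using \<rho> by (intro convex_comb_ge)
  next
    assume "\<tau> = \<tau>'" "\<rho>' \<le> \<rho>"
    have "0 \<le> (\<rho> - \<rho>') * (?K ?L - ?K ?E)"
    proof (cases "\<rho>' = \<rho>")
      case False
      with \<open>\<rho>' \<le> \<rho>\<close> \<rho>' have "0 < \<rho>"
        by simp
      then have "?K ?E \<le> ?K ?L"
        using below gains_below_imp_at_most by blast
      with \<open>\<rho>' \<le> \<rho>\<close> show ?thesis
        by simp
    qed simp
    moreover have "penalized_avg g m (sub_exec \<pi> p f \<tau> \<rho>) - penalized_avg g m (sub_exec \<pi> p f \<tau>' \<rho>') =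
        (\<rho> - \<rho>') * (?K ?L - ?K ?E)"
      unfolding penalized_avg_sub_exec[OF \<rho>] penalized_avg_sub_exec[OF \<rho>'] \<open>\<tau> = \<tau>'\<close>[symmetric]
      by (simp add: algebra_simps)
    ultimately show ?thesis
      by simp
  qed
qed

lemma c_avg_of_sub_exec_mono:
  fixes \<pi> :: "('v::finite, 'y::finite) policy"
  assumes "valid_policy \<pi>" "0 \<le> \<rho>" "\<rho> \<le> 1" "0 \<le> \<rho>'" "\<rho>' \<le> 1"
    and "\<tau> < \<tau>' \<or> \<tau> = \<tau>' \<and> \<rho>' \<le> \<rho>"
  shows "c_avg_of (sub_exec \<pi> p f \<tau>' \<rho>') \<le> c_avg_of (sub_exec \<pi> p f \<tau> \<rho>)"
proof -
  have count: "c_avg_of D = penalized_avg (\<lambda>_ _. 0) (-1) D" for D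
    by (simp add: penalized_avg_def f_avg_of_def case_prod_unfold)
  show ?thesis
    unfolding count
    by (rule penalized_avg_sub_exec_mono[OF assms]) (simp add: trace_gains_ge_def gain_def)
qed

lemma trace_gains_ge_Delta_l:
  fixes D :: "(('v::finite \<Rightarrow> 'y::finite) \<times> ('v \<rightharpoonup> 'y) \<times> (('v \<rightharpoonup> 'y) \<times> 'v) list) pmf"
  shows "trace_gains_ge D p f (Delta_l D p f)"
  unfolding trace_gains_ge_def
proof (intro ballI, clarify)
  fix \<omega> \<psi> v
  assume \<omega>: "\<omega> \<in> set_pmf D" "(\<psi>, v) \<in> set (snd (snd \<omega>))"
  show "Delta_l D p f \<le> gain p f v \<psi>"
    unfolding Delta_l_def
  proof (rule cSup_least)
    have "Min (range (\<lambda>(\<psi>, v). gain p f v \<psi>)) \<le> gain p f v' \<psi>'" for \<psi>' v'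
      by (rule Min_le) auto
    then show "{u. AE \<omega> in measure_pmf D. \<forall>(\<psi>, v)\<in>set (snd (snd \<omega>)). u \<le> gain p f v \<psi>} \<noteq> {}"
      by (auto simp: split_beta)
  next
    fix u
    assume "u \<in> {u. AE \<omega> in measure_pmf D. \<forall>(\<psi>, v)\<in>set (snd (snd \<omega>)). u \<le> gain p f v \<psi>}"
    with \<omega> show "u \<le> gain p f v \<psi>"
      unfolding AE_measure_pmf_iff by blast
  qed
qed

theorem lemma10:
  fixes \<pi> :: "('v::finite, 'y::finite) policy"
    and p :: "('v \<Rightarrow> 'y) pmf"
    and f :: "'v set \<Rightarrow> ('v \<Rightarrow> 'y) \<Rightarrow> real"
    and i :: nat
    and \<tau> \<rho> \<tau>' \<rho>' :: real
  assumes "valid_policy \<pi>"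
    and "1 \<le> i" and "real i \<le> c_avg \<pi> p"
    and "\<tau> \<ge> 0" and "0 \<le> \<rho>" and "\<rho> \<le> 1"
    and "c_avg_of (sub_exec \<pi> p f \<tau> \<rho>) = real i"
    and "\<tau>' \<ge> 0" and "0 \<le> \<rho>'" and "\<rho>' \<le> 1"
    and "c_avg_of (sub_exec \<pi> p f \<tau>' \<rho>') = real (i - 1)"
  shows "f_avg_of f (sub_exec \<pi> p f \<tau> \<rho>) - f_avg_of f (sub_exec \<pi> p f \<tau>' \<rho>')
           \<ge> Delta_l (sub_exec \<pi> p f \<tau> \<rho>) p f"
proof -
  let ?D = "sub_exec \<pi> p f \<tau> \<rho>" and ?D' = "sub_exec \<pi> p f \<tau>' \<rho>'"
  let ?m = "Delta_l ?D p f"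
  have costs: "c_avg_of ?D = c_avg_of ?D' + 1"
    using assms(2,7,11) by simp
  have "\<tau> < \<tau>' \<or> \<tau> = \<tau>' \<and> \<rho>' \<le> \<rho>"
  proof (rule ccontr)
    assume "\<not> ?thesis"
    then have "\<tau>' < \<tau> \<or> \<tau>' = \<tau> \<and> \<rho> \<le> \<rho>'"
      by auto
    then have "c_avg_of ?D \<le> c_avg_of ?D'"
      by (rule c_avg_of_sub_exec_mono[OF assms(1,9,10,5,6)])
    with costs show False
      by simp
  qed
  then have "penalized_avg f ?m ?D' \<le> penalized_avg f ?m ?D"
    by (rule penalized_avg_sub_exec_mono[OF assms(1,5,6,9,10) _ trace_gains_ge_Delta_l])
  with costs show ?thesis
    unfolding penalized_avg_def by (simp add: algebra_simps)
qed

end
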